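(* Let $0<m\le L$, $\kappa=L/m$, and let $\rho\in(0,1)$ satisfy $T_s=1/(1-\rho)\ge(\sqrt\kappa+1)/2$. Let $c=\dfrac{\kappa-(1+\rho)/(1-\rho)}{\rho\,(\kappa+(1+\rho)/(1-\rho))}$. Then $c\in[-1,1]$, the two-step momentum algorithm with parameters $\alpha=(1+\rho)(1+c\rho)/L$, $\beta=c\rho^2$, $\gamma=0$ achieves convergence rate $\rho$ for all $f\in\mathcal{Q}_m^L$, and $$\hat J_{\max}:=\max_{\lambda\in[m,L]}\hat J(\lambda)=\hat J(m)=\hat J(L)=\frac{\sigma_w^2(\kappa+1)}{2(1-c\rho^2)(1+\rho)(1+c\rho)},$$ $$\hat J_{\min}:=\min_{\lambda\in[m,L]}\hat J(\lambda)=\hat J(\hat\lambda)=\frac{\sigma_w^2}{(1+c\rho^2)(1-c\rho^2)},\qquad \hat\lambda=(m+L)/2.$$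
   Context: $\mathcal{Q}_m^L$ is the class of quadratic functions $f(x)=\tfrac12x^TQx-q^Tx$ on $\mathbb{R}^n$ with $q\in\mathbb{R}^n$, $Q=Q^T\succ0$ whose largest eigenvalue is $L$ and smallest is $m$. The two-step momentum algorithm is $x^{t+2}=x^{t+1}+\beta(x^{t+1}-x^t)-\alpha\nabla f\big(x^{t+1}+\gamma(x^{t+1}-x^t)\big)+\sigma_w w^t$ ($w^t$ white noise with zero mean and identity covariance, $\sigma_w\ge0$), with state matrix $A=\begin{bmatrix}0&I\\-\beta I+\gamma\alpha Q&(1+\beta)I-(1+\gamma)\alpha Q\end{bmatrix}$ on $\psi^t=[(x^t-x^\star)^T,(x^{t+1}-x^\star)^T]^T$; rate $\rho$ is achieved for all $f\in\mathcal{Q}_m^L$ if the spectral radius of $A$ is at most $\rho$ for every such $f$. For $\lambda>0$ let $a(\lambda)=\beta-\gamma\alpha\lambda$, $b(\lambda)=(1+\gamma)\alpha\lambda-(1+\beta)$, $d=a+b+1$, $l=a-b+1$, $h=1-a$ (evaluated at $\lambda$), and $\hat J(\lambda)=\sigma_w^2(d(\lambda)+l(\lambda))/(2d(\lambda)h(\lambda)l(\lambda))$ (the contribution of Hessian eigenvalue $\lambda$ to the steady-state variance of $x^t-x^\star$). *)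

theory Defs
  imports Complex_Main "Jordan_Normal_Form.Spectral_Radius"
begin

text \<open>Hessians Q of functions in the class Q_m^L on R^n (the linear term q plays no
  role in the state matrix, so only Q is recorded): Q is an n x n real symmetric
  positive definite matrix whose largest eigenvalue is L and smallest is m.\<close>
definition quad_hessian_class :: "real \<Rightarrow> real \<Rightarrow> nat \<Rightarrow> real mat \<Rightarrow> bool" where
  "quad_hessian_class m L n Q \<longleftrightarrow>
     Q \<in> carrier_mat n n \<and> transpose_mat Q = Q \<and>
     (\<forall>x \<in> carrier_vec n. x \<noteq> 0\<^sub>v n \<longrightarrow> x \<bullet> (Q *\<^sub>v x) > 0) \<and>
     eigenvalue Q L \<and> eigenvalue Q m \<and>
     (\<forall>lam. eigenvalue Q lam \<longrightarrow> m \<le> lam \<and> lam \<le> L)"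

text \<open>State matrix A of the two-step momentum algorithm acting on
  psi^t = [x^t - x*; x^(t+1) - x*].\<close>
definition momentum_state_matrix :: "real \<Rightarrow> real \<Rightarrow> real \<Rightarrow> nat \<Rightarrow> real mat \<Rightarrow> real mat" where
  "momentum_state_matrix \<alpha> \<beta> \<gamma> n Q =
     four_block_mat (0\<^sub>m n n) (1\<^sub>m n)
       ((- \<beta>) \<cdot>\<^sub>m 1\<^sub>m n + (\<gamma> * \<alpha>) \<cdot>\<^sub>m Q)
       ((1 + \<beta>) \<cdot>\<^sub>m 1\<^sub>m n - ((1 + \<gamma>) * \<alpha>) \<cdot>\<^sub>m Q)"

definition achieves_rate :: "real \<Rightarrow> real \<Rightarrow> real \<Rightarrow> real \<Rightarrow> real \<Rightarrow> real \<Rightarrow> bool" where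
  "achieves_rate m L \<alpha> \<beta> \<gamma> \<rho> \<longleftrightarrow>
     (\<forall>n Q. quad_hessian_class m L n Q \<longrightarrow>
        spectral_radius (map_mat complex_of_real (momentum_state_matrix \<alpha> \<beta> \<gamma> n Q)) \<le> \<rho>)"

definition ma :: "real \<Rightarrow> real \<Rightarrow> real \<Rightarrow> real \<Rightarrow> real" where
  "ma \<alpha> \<beta> \<gamma> lam = \<beta> - \<gamma> * \<alpha> * lam"
definition mb :: "real \<Rightarrow> real \<Rightarrow> real \<Rightarrow> real \<Rightarrow> real" where
  "mb \<alpha> \<beta> \<gamma> lam = (1 + \<gamma>) * \<alpha> * lam - (1 + \<beta>)"
definition md :: "real \<Rightarrow> real \<Rightarrow> real \<Rightarrow> real \<Rightarrow> real" where
  "md \<alpha> \<beta> \<gamma> lam = ma \<alpha> \<beta> \<gamma> lam + mb \<alpha> \<beta> \<gamma> lam + 1"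
definition ml :: "real \<Rightarrow> real \<Rightarrow> real \<Rightarrow> real \<Rightarrow> real" where
  "ml \<alpha> \<beta> \<gamma> lam = ma \<alpha> \<beta> \<gamma> lam - mb \<alpha> \<beta> \<gamma> lam + 1"
definition mh :: "real \<Rightarrow> real \<Rightarrow> real \<Rightarrow> real \<Rightarrow> real" where
  "mh \<alpha> \<beta> \<gamma> lam = 1 - ma \<alpha> \<beta> \<gamma> lam"

text \<open>Contribution of Hessian eigenvalue lam to the steady-state variance.\<close>
definition Jhat :: "real \<Rightarrow> real \<Rightarrow> real \<Rightarrow> real \<Rightarrow> real \<Rightarrow> real" where
  "Jhat \<sigma>w \<alpha> \<beta> \<gamma> lam =
     \<sigma>w\<^sup>2 * (md \<alpha> \<beta> \<gamma> lam + ml \<alpha> \<beta> \<gamma> lam) /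
     (2 * md \<alpha> \<beta> \<gamma> lam * mh \<alpha> \<beta> \<gamma> lam * ml \<alpha> \<beta> \<gamma> lam)"

end

theory Submission
  imports Defs
begin

(* With gamma = 0 the eigenvalues z of the state matrix are the roots of
   z^2 - (1 + beta - alpha lam) z + beta = 0 for the Hessian eigenvalues lam, which are
   real because Q is symmetric.  The tuning makes alpha m = (1 - rho)(1 - c rho) and
   alpha L = (1 + rho)(1 + c rho), so |1 + beta - alpha lam| <= rho (1 + c) on [m, L], and
   a real quadratic with constant term c rho^2 and such a middle coefficient has all its
   roots in the disc of radius rho.  With gamma = 0 the variance contribution is
   sigma^2 (1 + beta) / ((1 - beta) t (2 (1 + beta) - t)) at t = alpha lam; the endpoints
   alpha m, alpha L are symmetric about 1 + beta, so the concave denominator is smallest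
   at lam = m, L and largest at the midpoint. *)

lemma smult_mat_mult_mat_vec:
  assumes "A \<in> carrier_mat nr nc" and "v \<in> carrier_vec nc"
  shows "(k \<cdot>\<^sub>m A) *\<^sub>v v = k \<cdot>\<^sub>v (A *\<^sub>v v)"
  by (rule eq_vecI) (use assms in \<open>auto simp: smult_scalar_prod_distrib[of _ nc]\<close>)

lemma eigenvalue_map_of_real_iff:
  fixes Q :: "real mat"
  assumes "Q \<in> carrier_mat n n"
  shows "eigenvalue (map_mat complex_of_real Q) (of_real r) \<longleftrightarrow> eigenvalue Q r"
  using assms
  by (simp add: eigenvalue_root_char_poly of_real_hom.char_poly_hom of_real_hom.poly_map_poly)

lemma conjugate_of_real_mat_mult_vec:
  fixes Q :: "real mat" and u :: "complex vec"
  assumes "Q \<in> carrier_mat n n" and "u \<in> carrier_vec n"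
  shows "conjugate (map_mat complex_of_real Q *\<^sub>v u) = map_mat complex_of_real Q *\<^sub>v conjugate u"
  by (rule eq_vecI) (use assms in \<open>auto simp: scalar_prod_def\<close>)

lemma symmetric_real_mat_eigenvalue_real:
  fixes Q :: "real mat"
  assumes Q: "Q \<in> carrier_mat n n" and sym: "transpose_mat Q = Q"
    and ev: "eigenvalue (map_mat complex_of_real Q) \<mu>"
  shows "\<mu> \<in> \<real>"
proof -
  define Qc where "Qc = map_mat complex_of_real Q"
  have Qc: "Qc \<in> carrier_mat n n" "transpose_mat Qc = Qc"
    using Q sym unfolding Qc_def by (auto simp: map_mat_transpose)
  obtain u where u: "u \<in> carrier_vec n" "u \<noteq> 0\<^sub>v n" and Qu: "Qc *\<^sub>v u = \<mu> \<cdot>\<^sub>v u"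
    using ev Q unfolding eigenvalue_def eigenvector_def Qc_def by auto
  have Qu': "Qc *\<^sub>v conjugate u = cnj \<mu> \<cdot>\<^sub>v conjugate u"
    using conjugate_of_real_mat_mult_vec[OF Q u(1)] Qu conjugate_smult_vec[of \<mu> u]
    unfolding Qc_def by simp
  have "\<mu> * (conjugate u \<bullet> u) = conjugate u \<bullet> (Qc *\<^sub>v u)"
    using Qu u by simp
  also have "\<dots> = (Qc *\<^sub>v conjugate u) \<bullet> u"
    using transpose_vec_mult_scalar[OF Qc(1) u(1), of "conjugate u"] Qc(2) u by simp
  also have "\<dots> = cnj \<mu> * (conjugate u \<bullet> u)"
    using Qu' u by simp
  finally have "\<mu> * (u \<bullet>c u) = cnj \<mu> * (u \<bullet>c u)"
    using conjugate_vec_sprod_comm[OF u(1) u(1)] by simp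
  moreover have "u \<bullet>c u \<noteq> 0"
    using u by simp
  ultimately have "cnj \<mu> = \<mu>" by simp
  then show ?thesis by (simp add: Reals_cnj_iff)
qed

lemma eigenvalue_block_companion:
  fixes C D :: "'a::field mat"
  assumes C: "C \<in> carrier_mat n n" and D: "D \<in> carrier_mat n n"
    and ev: "eigenvalue (four_block_mat (0\<^sub>m n n) (1\<^sub>m n) C D) z"
  obtains u where "u \<in> carrier_vec n" "u \<noteq> 0\<^sub>v n" "C *\<^sub>v u + z \<cdot>\<^sub>v (D *\<^sub>v u) = z\<^sup>2 \<cdot>\<^sub>v u"
proof -
  obtain w where w: "w \<in> carrier_vec (n + n)" "w \<noteq> 0\<^sub>v (n + n)"
    and Mw: "four_block_mat (0\<^sub>m n n) (1\<^sub>m n) C D *\<^sub>v w = z \<cdot>\<^sub>v w"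
    using ev C D unfolding eigenvalue_def eigenvector_def by auto
  define u where "u = vec_first w n"
  define v where "v = vec_last w n"
  have u: "u \<in> carrier_vec n" and v: "v \<in> carrier_vec n"
    unfolding u_def v_def by auto
  have w_split: "w = u @\<^sub>v v"
    unfolding u_def v_def using w(1) by simp
  have "four_block_mat (0\<^sub>m n n) (1\<^sub>m n) C D *\<^sub>v (u @\<^sub>v v)
      = (0\<^sub>m n n *\<^sub>v u + 1\<^sub>m n *\<^sub>v v) @\<^sub>v (C *\<^sub>v u + D *\<^sub>v v)"
    by (rule four_block_mat_mult_vec) (use C D u v in auto)
  moreover have "z \<cdot>\<^sub>v (u @\<^sub>v v) = (z \<cdot>\<^sub>v u) @\<^sub>v (z \<cdot>\<^sub>v v)"
    by (rule eq_vecI) (use u v in auto)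
  moreover have "0\<^sub>m n n *\<^sub>v u + 1\<^sub>m n *\<^sub>v v = v"
    by (rule eq_vecI) (use u v in auto)
  ultimately have "v @\<^sub>v (C *\<^sub>v u + D *\<^sub>v v) = (z \<cdot>\<^sub>v u) @\<^sub>v (z \<cdot>\<^sub>v v)"
    using Mw unfolding w_split by simp
  then have top: "v = z \<cdot>\<^sub>v u" and bottom: "C *\<^sub>v u + D *\<^sub>v v = z \<cdot>\<^sub>v v"
    using append_vec_eq[of v n "z \<cdot>\<^sub>v u"] u v by auto
  have "u \<noteq> 0\<^sub>v n"
  proof
    assume "u = 0\<^sub>v n"
    then have "w = 0\<^sub>v (n + n)"
      using w_split top by auto
    then show False using w(2) by simp
  qed
  moreover have "C *\<^sub>v u + z \<cdot>\<^sub>v (D *\<^sub>v u) = z\<^sup>2 \<cdot>\<^sub>v u"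
    using bottom D u unfolding top by (simp add: mult_mat_vec smult_smult_assoc power2_eq_square)
  ultimately show thesis using that u by blast
qed

lemma real_quadratic_root_le:
  fixes x p q \<rho> :: real
  assumes \<rho>: "\<rho> > 0" and q: "q \<le> \<rho>\<^sup>2" and p: "\<rho> * \<bar>p\<bar> \<le> \<rho>\<^sup>2 + q"
    and root: "x\<^sup>2 - p * x + q = 0"
  shows "x \<le> \<rho>"
proof (rule ccontr)
  assume "\<not> x \<le> \<rho>"
  then have x: "x > \<rho>" by simp
  have "\<rho> * p \<le> \<rho> * \<bar>p\<bar>"
    using \<rho> by (simp add: mult_left_mono)
  then have "\<rho> * p \<le> \<rho> * (2 * \<rho>)" and pq: "\<rho> * p \<le> \<rho>\<^sup>2 + q"
    using p q by (simp_all add: power2_eq_square)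
  then have "p \<le> 2 * \<rho>" using \<rho> by simp
  have "x\<^sup>2 - p * x + q = (x - \<rho>) * (x + \<rho> - p) + (\<rho>\<^sup>2 - \<rho> * p + q)"
    by (simp add: algebra_simps power2_eq_square)
  also have "\<dots> > 0"
    using x \<open>p \<le> 2 * \<rho>\<close> pq by (intro add_pos_nonneg mult_pos_pos) auto
  finally show False using root by simp
qed

lemma quadratic_root_norm_le:
  fixes z :: complex and p q \<rho> :: real
  assumes \<rho>: "\<rho> > 0" and q: "q \<le> \<rho>\<^sup>2" and p: "\<rho> * \<bar>p\<bar> \<le> \<rho>\<^sup>2 + q"
    and root: "z\<^sup>2 - of_real p * z + of_real q = 0"
  shows "cmod z \<le> \<rho>"
proof (cases "Im z = 0")
  case True
  define x where "x = Re z"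
  have z: "z = of_real x"
    using True unfolding x_def by (simp add: complex_eq_iff)
  have "of_real (x\<^sup>2 - p * x + q) = (0 :: complex)"
    using root unfolding z by simp
  then have "x\<^sup>2 - p * x + q = 0"
    by (simp only: of_real_eq_0_iff)
  then have "x \<le> \<rho>" and "- x \<le> \<rho>"
    using real_quadratic_root_le[OF \<rho> q, of p x] real_quadratic_root_le[OF \<rho> q, of "- p" "- x"] p
    by simp_all
  then show ?thesis unfolding z by simp
next
  case False
  have "Im z * (2 * Re z - p) = 0"
    using arg_cong[OF root, of Im] by (simp add: power2_eq_square algebra_simps)
  then have "p * Re z = 2 * (Re z)\<^sup>2" using False by (simp add: power2_eq_square)
  moreover have "(Re z)\<^sup>2 - (Im z)\<^sup>2 - p * Re z + q = 0"
    using arg_cong[OF root, of Re] by (simp add: power2_eq_square)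
  ultimately have "(cmod z)\<^sup>2 = q"
    unfolding cmod_power2 by linarith
  then have "(cmod z)\<^sup>2 \<le> \<rho>\<^sup>2"
    using q by linarith
  from power2_le_imp_le[OF this] show ?thesis
    using \<rho> by simp
qed

lemma heavy_ball_eigenvalue_root:
  fixes Q :: "real mat" and z :: complex
  assumes Q: "Q \<in> carrier_mat n n" and sym: "transpose_mat Q = Q"
    and ev: "eigenvalue (map_mat complex_of_real (momentum_state_matrix \<alpha> \<beta> 0 n Q)) z"
    and z: "z \<noteq> 0" and \<alpha>: "\<alpha> \<noteq> 0"
  obtains r where "eigenvalue Q r" "z\<^sup>2 - of_real (1 + \<beta> - \<alpha> * r) * z + of_real \<beta> = 0"
proof -
  define Qc where "Qc = map_mat complex_of_real Q"
  have Qc: "Qc \<in> carrier_mat n n" unfolding Qc_def using Q by simp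
  define C :: "complex mat" where "C = of_real (- \<beta>) \<cdot>\<^sub>m 1\<^sub>m n"
  define D where "D = of_real (1 + \<beta>) \<cdot>\<^sub>m 1\<^sub>m n - of_real \<alpha> \<cdot>\<^sub>m Qc"
  have "map_mat complex_of_real (momentum_state_matrix \<alpha> \<beta> 0 n Q) = four_block_mat (0\<^sub>m n n) (1\<^sub>m n) C D"
    unfolding momentum_state_matrix_def C_def D_def Qc_def by (rule eq_matI) (use Q in auto)
  moreover have C: "C \<in> carrier_mat n n" and D: "D \<in> carrier_mat n n"
    unfolding C_def D_def using Qc by auto
  ultimately obtain u where u: "u \<in> carrier_vec n" "u \<noteq> 0\<^sub>v n"
    and Cu: "C *\<^sub>v u + z \<cdot>\<^sub>v (D *\<^sub>v u) = z\<^sup>2 \<cdot>\<^sub>v u"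
    using eigenvalue_block_companion ev by metis
  define \<mu> where "\<mu> = (of_real (1 + \<beta>) * z - of_real \<beta> - z\<^sup>2) / (of_real \<alpha> * z)"
  have "Qc *\<^sub>v u = \<mu> \<cdot>\<^sub>v u"
  proof (rule eq_vecI)
    fix i assume "i < dim_vec (\<mu> \<cdot>\<^sub>v u)"
    then have i: "i < n" using u by simp
    have "(C *\<^sub>v u + z \<cdot>\<^sub>v (D *\<^sub>v u)) $ i = (z\<^sup>2 \<cdot>\<^sub>v u) $ i" using Cu by simp
    then have "- of_real \<beta> * u $ i + z * (of_real (1 + \<beta>) * u $ i - of_real \<alpha> * (Qc *\<^sub>v u) $ i) = z\<^sup>2 * u $ i"
      using i u Qc unfolding C_def D_def
      by (simp add: smult_mat_mult_mat_vec minus_mult_distrib_mat_vec[of _ n n])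
    then show "(Qc *\<^sub>v u) $ i = (\<mu> \<cdot>\<^sub>v u) $ i"
      using i u z \<alpha> unfolding \<mu>_def by (simp add: field_simps)
  qed (use u Qc in auto)
  then have "eigenvalue Qc \<mu>"
    unfolding eigenvalue_def eigenvector_def using Qc u by blast
  moreover from this obtain r where r: "\<mu> = of_real r"
    using symmetric_real_mat_eigenvalue_real[OF Q sym] unfolding Qc_def by (auto elim: Reals_cases)
  ultimately have "eigenvalue Q r"
    using eigenvalue_map_of_real_iff[OF Q] unfolding Qc_def by simp
  moreover have "z\<^sup>2 - of_real (1 + \<beta> - \<alpha> * r) * z + of_real \<beta> = 0"
    using r z \<alpha> unfolding \<mu>_def by (simp add: field_simps)
  ultimately show thesis using that by blast
qed

lemma heavy_ball_achieves_rate: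
  assumes \<rho>: "0 < \<rho>" and \<alpha>: "0 < \<alpha>" and \<beta>: "\<beta> \<le> \<rho>\<^sup>2"
    and bound: "\<And>lam. m \<le> lam \<Longrightarrow> lam \<le> L \<Longrightarrow> \<rho> * \<bar>1 + \<beta> - \<alpha> * lam\<bar> \<le> \<rho>\<^sup>2 + \<beta>"
  shows "achieves_rate m L \<alpha> \<beta> 0 \<rho>"
  unfolding achieves_rate_def
proof (intro allI impI)
  fix n Q
  assume "quad_hessian_class m L n Q"
  then have Q: "Q \<in> carrier_mat n n" and sym: "transpose_mat Q = Q" and "eigenvalue Q L"
    and eigenvalue_range: "\<And>r. eigenvalue Q r \<Longrightarrow> m \<le> r \<and> r \<le> L"
    unfolding quad_hessian_class_def by auto
  have "0 < n + n"
    using eigenvalue_imp_nonzero_dim[OF Q \<open>eigenvalue Q L\<close>] by simp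
  define A where "A = map_mat complex_of_real (momentum_state_matrix \<alpha> \<beta> 0 n Q)"
  have "A \<in> carrier_mat (n + n) (n + n)"
    unfolding A_def momentum_state_matrix_def using Q by auto
  from spectral_radius_mem_max(1)[OF this \<open>0 < n + n\<close>]
  obtain z where "z \<in> spectrum A" and radius: "spectral_radius A = cmod z"
    by blast
  have "cmod z \<le> \<rho>"
  proof (cases "z = 0")
    case True
    then show ?thesis using \<rho> by simp
  next
    case False
    have "eigenvalue (map_mat complex_of_real (momentum_state_matrix \<alpha> \<beta> 0 n Q)) z"
      using \<open>z \<in> spectrum A\<close> unfolding A_def spectrum_def by simp
    with Q sym False \<alpha> obtain r where "eigenvalue Q r"
      and root: "z\<^sup>2 - of_real (1 + \<beta> - \<alpha> * r) * z + of_real \<beta> = 0"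
      by (metis heavy_ball_eigenvalue_root less_irrefl)
    from eigenvalue_range[OF this(1)] have "\<rho> * \<bar>1 + \<beta> - \<alpha> * r\<bar> \<le> \<rho>\<^sup>2 + \<beta>"
      using bound by blast
    from quadratic_root_norm_le[OF \<rho> \<beta> this root] show ?thesis .
  qed
  then show "spectral_radius A \<le> \<rho>" using radius by simp
qed

lemma Jhat_heavy_ball:
  "Jhat \<sigma>w \<alpha> \<beta> 0 lam
     = \<sigma>w\<^sup>2 * (1 + \<beta>) / ((1 - \<beta>) * (\<alpha> * lam * (2 * (1 + \<beta>) - \<alpha> * lam)))"
proof -
  have "Jhat \<sigma>w \<alpha> \<beta> 0 lam
      = (2 * (\<sigma>w\<^sup>2 * (1 + \<beta>))) / (2 * ((1 - \<beta>) * (\<alpha> * lam * (2 * (1 + \<beta>) - \<alpha> * lam))))"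
    unfolding Jhat_def md_def ml_def mh_def ma_def mb_def by (simp add: algebra_simps)
  then show ?thesis by simp
qed

context
  fixes \<sigma>w \<alpha> \<beta> m L :: real
  assumes \<alpha>: "0 < \<alpha>" and m: "0 < m" and mL: "m \<le> L" and \<beta>: "\<beta> < 1"
    and steps_sum: "\<alpha> * m + \<alpha> * L = 2 * (1 + \<beta>)"
begin

private lemma steps_midpoint: "\<alpha> * ((m + L) / 2) = 1 + \<beta>"
  using steps_sum by (simp add: algebra_simps)

private lemma one_plus_beta_pos: "0 < 1 + \<beta>"
proof -
  have "0 < \<alpha> * m" "0 < \<alpha> * L" using \<alpha> m mL by simp_all
  then show ?thesis using steps_sum by (simp add: algebra_simps)
qed

private lemma Jhat_denominator_bounds:
  assumes "lam \<in> {m..L}"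
  shows "\<alpha> * m * (\<alpha> * L) \<le> \<alpha> * lam * (2 * (1 + \<beta>) - \<alpha> * lam)"
    and "\<alpha> * lam * (2 * (1 + \<beta>) - \<alpha> * lam) \<le> (1 + \<beta>)\<^sup>2"
proof -
  have "\<alpha> * m \<le> \<alpha> * lam" "\<alpha> * lam \<le> \<alpha> * L"
    using assms \<alpha> by simp_all
  then have "0 \<le> (\<alpha> * lam - \<alpha> * m) * (\<alpha> * L - \<alpha> * lam)"
    by (intro mult_nonneg_nonneg) auto
  also have "\<dots> = \<alpha> * lam * (2 * (1 + \<beta>) - \<alpha> * lam) - \<alpha> * m * (\<alpha> * L)"
    unfolding steps_sum[symmetric] by (simp add: algebra_simps)
  finally show "\<alpha> * m * (\<alpha> * L) \<le> \<alpha> * lam * (2 * (1 + \<beta>) - \<alpha> * lam)"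
    by simp
  have "0 \<le> (1 + \<beta> - \<alpha> * lam)\<^sup>2" by simp
  also have "\<dots> = (1 + \<beta>)\<^sup>2 - \<alpha> * lam * (2 * (1 + \<beta>) - \<alpha> * lam)"
    by (simp add: algebra_simps power2_eq_square)
  finally show "\<alpha> * lam * (2 * (1 + \<beta>) - \<alpha> * lam) \<le> (1 + \<beta>)\<^sup>2"
    by simp
qed

private lemma Jhat_denominator_antimono:
  assumes "0 < x" and "x \<le> y"
  shows "\<sigma>w\<^sup>2 * (1 + \<beta>) / ((1 - \<beta>) * y) \<le> \<sigma>w\<^sup>2 * (1 + \<beta>) / ((1 - \<beta>) * x)"
  using assms \<beta> one_plus_beta_pos by (intro divide_left_mono mult_left_mono mult_pos_pos) auto

private lemma Jhat_upper_eq: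
  "Jhat \<sigma>w \<alpha> \<beta> 0 L = \<sigma>w\<^sup>2 * (1 + \<beta>) / ((1 - \<beta>) * (\<alpha> * m * (\<alpha> * L)))"
  unfolding Jhat_heavy_ball steps_sum[symmetric] by (simp add: ac_simps)

lemma Jhat_upper_eq_condition_number:
  "Jhat \<sigma>w \<alpha> \<beta> 0 L = \<sigma>w\<^sup>2 * (L / m + 1) / (2 * (1 - \<beta>) * (\<alpha> * L))"
proof -
  have "\<alpha> * m * (L / m + 1) = \<alpha> * m + \<alpha> * L"
    using m by (simp add: field_simps)
  then have one_plus_\<beta>: "1 + \<beta> = \<alpha> * m * (L / m + 1) / 2"
    using steps_sum by simp
  have "1 - \<beta> \<noteq> 0" using \<beta> by simp
  then show ?thesis
    unfolding Jhat_upper_eq one_plus_\<beta> using \<alpha> m mL by (simp add: field_simps)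
qed

lemma Jhat_lower_eq_upper: "Jhat \<sigma>w \<alpha> \<beta> 0 m = Jhat \<sigma>w \<alpha> \<beta> 0 L"
  unfolding Jhat_heavy_ball steps_sum[symmetric] by (simp add: ac_simps)

lemma Jhat_le_lower:
  assumes "lam \<in> {m..L}"
  shows "Jhat \<sigma>w \<alpha> \<beta> 0 lam \<le> Jhat \<sigma>w \<alpha> \<beta> 0 m"
proof -
  have "Jhat \<sigma>w \<alpha> \<beta> 0 lam \<le> \<sigma>w\<^sup>2 * (1 + \<beta>) / ((1 - \<beta>) * (\<alpha> * m * (\<alpha> * L)))"
    unfolding Jhat_heavy_ball using Jhat_denominator_bounds(1)[OF assms] \<alpha> m mL
    by (intro Jhat_denominator_antimono) auto
  then show ?thesis
    unfolding Jhat_lower_eq_upper Jhat_upper_eq .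
qed

lemma Jhat_midpoint_eq:
  "Jhat \<sigma>w \<alpha> \<beta> 0 ((m + L) / 2) = \<sigma>w\<^sup>2 / ((1 + \<beta>) * (1 - \<beta>))"
proof -
  have "Jhat \<sigma>w \<alpha> \<beta> 0 ((m + L) / 2)
      = ((1 + \<beta>) * \<sigma>w\<^sup>2) / ((1 + \<beta>) * ((1 + \<beta>) * (1 - \<beta>)))"
    unfolding Jhat_heavy_ball steps_midpoint by (simp add: ac_simps)
  also have "\<dots> = \<sigma>w\<^sup>2 / ((1 + \<beta>) * (1 - \<beta>))"
    using one_plus_beta_pos by (intro nonzero_mult_divide_mult_cancel_left) simp
  finally show ?thesis .
qed

lemma Jhat_midpoint_le:
  assumes "lam \<in> {m..L}"
  shows "Jhat \<sigma>w \<alpha> \<beta> 0 ((m + L) / 2) \<le> Jhat \<sigma>w \<alpha> \<beta> 0 lam"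
proof -
  have "0 < \<alpha> * m * (\<alpha> * L)" using \<alpha> m mL by simp
  then show ?thesis
    unfolding Jhat_heavy_ball steps_midpoint using Jhat_denominator_bounds[OF assms]
    by (intro Jhat_denominator_antimono) (auto simp: power2_eq_square)
qed

end

lemma tuned_momentum_c_bounds:
  fixes \<kappa> \<rho> c :: real
  assumes \<kappa>: "1 \<le> \<kappa>" and \<rho>: "0 < \<rho>" "\<rho> < 1"
    and sqrt_\<kappa>: "sqrt \<kappa> \<le> (1 + \<rho>) / (1 - \<rho>)"
    and c: "c = (\<kappa> - (1 + \<rho>) / (1 - \<rho>)) / (\<rho> * (\<kappa> + (1 + \<rho>) / (1 - \<rho>)))"
  shows "-1 \<le> c" and "c \<le> 1"
proof -
  define s where "s = (1 + \<rho>) / (1 - \<rho>)"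
  have s: "s * (1 - \<rho>) = 1 + \<rho>" "1 \<le> s"
    using \<rho> unfolding s_def by (simp_all add: field_simps)
  have "\<kappa> = (sqrt \<kappa>)\<^sup>2" using \<kappa> by simp
  also have "\<dots> \<le> s\<^sup>2"
    using sqrt_\<kappa> \<kappa> unfolding s_def[symmetric] by (intro power_mono) auto
  finally have "\<kappa> \<le> s\<^sup>2" .
  have den: "0 < \<rho> * (\<kappa> + s)" using \<rho> \<kappa> s by simp
  have "(\<kappa> - s) + \<rho> * (\<kappa> + s) = (\<kappa> - 1) * (1 + \<rho>)"
    using s(1) by (simp add: algebra_simps)
  also have "\<dots> \<ge> 0" using \<kappa> \<rho> by simp
  finally have "- (\<rho> * (\<kappa> + s)) \<le> \<kappa> - s" by simp
  then show "-1 \<le> c"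
    using den unfolding c s_def[symmetric] by (simp add: field_simps)
  have "\<rho> * (\<kappa> + s) - (\<kappa> - s) = s * (1 + \<rho>) - \<kappa> * (1 - \<rho>)"
    by (simp add: algebra_simps)
  also have "\<dots> = (s\<^sup>2 - \<kappa>) * (1 - \<rho>)"
    unfolding s(1)[symmetric] by (simp add: algebra_simps power2_eq_square)
  also have "\<dots> \<ge> 0" using \<open>\<kappa> \<le> s\<^sup>2\<close> \<rho> by simp
  finally have "\<kappa> - s \<le> \<rho> * (\<kappa> + s)" by simp
  then show "c \<le> 1"
    using den unfolding c s_def[symmetric] by (simp add: field_simps)
qed

lemma tuned_momentum_step_sizes:
  fixes m L \<kappa> \<rho> c \<alpha> :: real
  assumes m: "0 < m" "m \<le> L" and \<kappa>: "\<kappa> = L / m" and \<rho>: "0 < \<rho>" "\<rho> < 1"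
    and c: "c = (\<kappa> - (1 + \<rho>) / (1 - \<rho>)) / (\<rho> * (\<kappa> + (1 + \<rho>) / (1 - \<rho>)))"
    and \<alpha>: "\<alpha> = (1 + \<rho>) * (1 + c * \<rho>) / L"
  shows "\<alpha> * m = (1 - \<rho>) * (1 - c * \<rho>)" and "\<alpha> * L = (1 + \<rho>) * (1 + c * \<rho>)"
proof -
  show step_L: "\<alpha> * L = (1 + \<rho>) * (1 + c * \<rho>)"
    using m \<alpha> by simp
  define s where "s = (1 + \<rho>) / (1 - \<rho>)"
  have s: "s * (1 - \<rho>) = 1 + \<rho>" "0 < s"
    using \<rho> unfolding s_def by (simp_all add: field_simps)
  have "0 < \<kappa>" using m \<kappa> by simp
  then have "c * (\<rho> * (\<kappa> + s)) = \<kappa> - s"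
    using \<rho> s unfolding c s_def[symmetric] by simp
  then have "\<kappa> * (1 - c * \<rho>) = s * (1 + c * \<rho>)"
    by (simp add: algebra_simps)
  then have "\<kappa> * (1 - c * \<rho>) * (1 - \<rho>) = s * (1 - \<rho>) * (1 + c * \<rho>)"
    by simp
  then have "\<kappa> * (\<alpha> * m) = \<kappa> * ((1 - \<rho>) * (1 - c * \<rho>))"
    unfolding s(1) step_L[symmetric] using m \<kappa> by (simp add: ac_simps)
  then show "\<alpha> * m = (1 - \<rho>) * (1 - c * \<rho>)"
    using \<open>0 < \<kappa>\<close> by simp
qed

lemma tuned_heavy_ball_parameters:
  fixes m L \<rho> c \<alpha> :: real
  assumes \<rho>: "0 < \<rho>" "\<rho> < 1" and c: "-1 \<le> c" "c \<le> 1" and m: "0 < m"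
    and step_m: "\<alpha> * m = (1 - \<rho>) * (1 - c * \<rho>)"
    and step_L: "\<alpha> * L = (1 + \<rho>) * (1 + c * \<rho>)"
  shows "0 < \<alpha>" and "c * \<rho>\<^sup>2 < 1" and "\<alpha> * m + \<alpha> * L = 2 * (1 + c * \<rho>\<^sup>2)"
proof -
  have "\<bar>c * \<rho>\<bar> = \<bar>c\<bar> * \<rho>"
    using \<rho> by (simp add: abs_mult)
  also have "\<dots> \<le> 1 * \<rho>"
    using c \<rho> by (intro mult_right_mono) auto
  also have "\<dots> < 1"
    using \<rho> by simp
  finally have c\<rho>: "\<bar>c * \<rho>\<bar> < 1" .
  then have "0 < \<alpha> * m"
    unfolding step_m using \<rho> by (simp add: abs_less_iff)
  then show "0 < \<alpha>"
    using m by (simp add: zero_less_mult_iff)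
  have "c * \<rho>\<^sup>2 \<le> \<bar>c * \<rho>\<bar> * \<rho>"
    using \<rho> by (simp add: power2_eq_square mult.assoc[symmetric] mult_right_mono)
  also have "\<dots> \<le> \<rho>"
    using c\<rho> \<rho> by (intro mult_left_le_one_le) auto
  finally show "c * \<rho>\<^sup>2 < 1"
    using \<rho> by simp
  show "\<alpha> * m + \<alpha> * L = 2 * (1 + c * \<rho>\<^sup>2)"
    unfolding step_m step_L by (simp add: algebra_simps power2_eq_square)
qed

lemma tuned_heavy_ball_achieves_rate:
  fixes m L \<rho> c \<alpha> :: real
  assumes \<rho>: "0 < \<rho>" and c: "c \<le> 1" and \<alpha>: "0 < \<alpha>"
    and step_m: "\<alpha> * m = (1 - \<rho>) * (1 - c * \<rho>)"
    and step_L: "\<alpha> * L = (1 + \<rho>) * (1 + c * \<rho>)"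
  shows "achieves_rate m L \<alpha> (c * \<rho>\<^sup>2) 0 \<rho>"
proof (rule heavy_ball_achieves_rate[OF \<rho> \<alpha>])
  show "c * \<rho>\<^sup>2 \<le> \<rho>\<^sup>2"
    using mult_right_mono[OF c, of "\<rho>\<^sup>2"] by simp
  fix lam
  assume "m \<le> lam" and "lam \<le> L"
  then have "\<alpha> * m \<le> \<alpha> * lam" and "\<alpha> * lam \<le> \<alpha> * L"
    using \<alpha> by simp_all
  then have "\<bar>1 + c * \<rho>\<^sup>2 - \<alpha> * lam\<bar> \<le> \<rho> * (1 + c)"
    unfolding step_m step_L by (simp add: algebra_simps power2_eq_square abs_le_iff)
  then have "\<rho> * \<bar>1 + c * \<rho>\<^sup>2 - \<alpha> * lam\<bar> \<le> \<rho> * (\<rho> * (1 + c))"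
    using \<rho> by (simp add: mult_left_mono)
  then show "\<rho> * \<bar>1 + c * \<rho>\<^sup>2 - \<alpha> * lam\<bar> \<le> \<rho>\<^sup>2 + c * \<rho>\<^sup>2"
    by (simp add: algebra_simps power2_eq_square)
qed

theorem lemma4:
  fixes m L \<rho> \<sigma>w \<kappa> c \<alpha> \<beta> :: real
  assumes "0 < m" and "m \<le> L" and "\<kappa> = L / m"
    and "0 < \<rho>" and "\<rho> < 1"
    and "1 / (1 - \<rho>) \<ge> (sqrt \<kappa> + 1) / 2"
    and "\<sigma>w \<ge> 0"
    and "c = (\<kappa> - (1 + \<rho>) / (1 - \<rho>)) / (\<rho> * (\<kappa> + (1 + \<rho>) / (1 - \<rho>)))"
    and "\<alpha> = (1 + \<rho>) * (1 + c * \<rho>) / L"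
    and "\<beta> = c * \<rho>\<^sup>2"
  shows "-1 \<le> c \<and> c \<le> 1
    \<and> achieves_rate m L \<alpha> \<beta> 0 \<rho>
    \<and> (\<forall>lam \<in> {m..L}. Jhat \<sigma>w \<alpha> \<beta> 0 lam \<le> Jhat \<sigma>w \<alpha> \<beta> 0 m)
    \<and> Jhat \<sigma>w \<alpha> \<beta> 0 m = Jhat \<sigma>w \<alpha> \<beta> 0 L
    \<and> Jhat \<sigma>w \<alpha> \<beta> 0 L = \<sigma>w\<^sup>2 * (\<kappa> + 1) / (2 * (1 - c * \<rho>\<^sup>2) * (1 + \<rho>) * (1 + c * \<rho>))
    \<and> (\<forall>lam \<in> {m..L}. Jhat \<sigma>w \<alpha> \<beta> 0 ((m + L) / 2) \<le> Jhat \<sigma>w \<alpha> \<beta> 0 lam)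
    \<and> Jhat \<sigma>w \<alpha> \<beta> 0 ((m + L) / 2) = \<sigma>w\<^sup>2 / ((1 + c * \<rho>\<^sup>2) * (1 - c * \<rho>\<^sup>2))"
proof -
  have \<kappa>: "1 \<le> \<kappa>" using assms(1-3) by simp
  have "sqrt \<kappa> \<le> (1 + \<rho>) / (1 - \<rho>)"
    using assms(4-6) by (simp add: field_simps)
  then have c: "-1 \<le> c" "c \<le> 1"
    using tuned_momentum_c_bounds[OF \<kappa> assms(4,5) _ assms(8)] by auto
  note step_sizes = tuned_momentum_step_sizes[OF assms(1-5,8,9)]
  note params = tuned_heavy_ball_parameters[OF assms(4,5) c assms(1) step_sizes]
  have rate: "achieves_rate m L \<alpha> \<beta> 0 \<rho>"
    unfolding assms(10) using tuned_heavy_ball_achieves_rate[OF assms(4) c(2) params(1) step_sizes] .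
  note Jhat_extremes = Jhat_le_lower Jhat_lower_eq_upper Jhat_upper_eq_condition_number
    Jhat_midpoint_le Jhat_midpoint_eq
  note Jhat = Jhat_extremes[OF params(1) assms(1,2) params(2,3)[folded assms(10)]]
  have "Jhat \<sigma>w \<alpha> \<beta> 0 L = \<sigma>w\<^sup>2 * (\<kappa> + 1) / (2 * (1 - c * \<rho>\<^sup>2) * (1 + \<rho>) * (1 + c * \<rho>))"
    using Jhat(3) unfolding step_sizes(2) assms(3,10) by (simp add: mult.assoc)
  then show ?thesis
    using c rate Jhat(1,2,4,5) unfolding assms(10) by blast
qed

end
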